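(* Let $\kappa$ be an infinite cardinal of uncountable cofinality $\mathrm{cf}(\kappa)$. If a Banach space $X$ of density character $\kappa$ contains an isomorphic copy of $c_0(\kappa)$, then $X$ admits an equivalent norm for which it is $\mathrm{SQ}_{<\mathrm{cf}(\kappa)}$.
   Context: For a cardinal $\mu$, a Banach space $Z$ is $\mathrm{SQ}_{<\mu}$ if for every set $A\subset S_Z$ with $|A|<\mu$ there exists $y\in S_Z$ with $\|x\pm y\|\le 1$ for all $x\in A$. *)

theory Defs
  imports "HOL-Analysis.Analysis"
begin

text \<open>Cardinals are represented as cardinalities of sets; an infinite cardinal kappa is
  represented by a type 'k with UNIV::'k set of cardinality kappa, together with a
  cardinal (initial) well-order r on 'k, which plays the role of the initial ordinal kappa.\<close>

definition cofinal_in :: "'k rel \<Rightarrow> 'k set \<Rightarrow> bool" where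
  "cofinal_in r C \<longleftrightarrow> (\<forall>k. \<exists>c\<in>C. (k, c) \<in> r)"

text \<open>card A < cf(kappa): A is strictly smaller than every cofinal subset of kappa
  (cf(kappa) is the least cardinality of a cofinal subset).\<close>
definition card_less_cf :: "'b set \<Rightarrow> 'k rel \<Rightarrow> bool" where
  "card_less_cf A r \<longleftrightarrow> (\<forall>C. cofinal_in r C \<longrightarrow> ordLess2 (card_of A) (card_of C))"

definition uncountable_cf :: "'k rel \<Rightarrow> bool" where
  "uncountable_cf r \<longleftrightarrow> (\<forall>C. cofinal_in r C \<longrightarrow> \<not> countable C)"

definition density_char_eq :: "'a::metric_space itself \<Rightarrow> 'k set \<Rightarrow> bool" where
  "density_char_eq _ K \<longleftrightarrow>
     (\<exists>D::'a set. closure D = UNIV \<and> ordIso2 (card_of D) (card_of K)) \<and>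
     (\<forall>D::'a set. closure D = UNIV \<longrightarrow> ordLeq2 (card_of K) (card_of D))"

definition c0 :: "('k \<Rightarrow> real) set" where
  "c0 = {f. \<forall>e>0. finite {k. e \<le> \<bar>f k\<bar>}}"

definition supnorm :: "('k \<Rightarrow> real) \<Rightarrow> real" where
  "supnorm f = (SUP k. \<bar>f k\<bar>)"

definition contains_c0 :: "'a::real_normed_vector itself \<Rightarrow> 'k set \<Rightarrow> bool" where
  "contains_c0 _ K \<longleftrightarrow> (\<exists>T :: ('k \<Rightarrow> real) \<Rightarrow> 'a. \<exists>m M. 0 < m \<and>
     (\<forall>f\<in>c0. \<forall>g\<in>c0. T (\<lambda>k. f k + g k) = T f + T g) \<and>
     (\<forall>f\<in>c0. \<forall>a. T (\<lambda>k. a * f k) = a *\<^sub>R T f) \<and>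
     (\<forall>f\<in>c0. m * supnorm f \<le> norm (T f) \<and> norm (T f) \<le> M * supnorm f))"

definition equiv_norm :: "('a::real_normed_vector \<Rightarrow> real) \<Rightarrow> bool" where
  "equiv_norm N \<longleftrightarrow>
     (\<forall>x. 0 \<le> N x) \<and> (\<forall>x. N x = 0 \<longleftrightarrow> x = 0) \<and>
     (\<forall>x y. N (x + y) \<le> N x + N y) \<and> (\<forall>a x. N (a *\<^sub>R x) = \<bar>a\<bar> * N x) \<and>
     (\<exists>m M. 0 < m \<and> (\<forall>x. m * norm x \<le> N x \<and> N x \<le> M * norm x))"

definition SQ_less_cf :: "('a::real_normed_vector \<Rightarrow> real) \<Rightarrow> 'k rel \<Rightarrow> bool" where
  "SQ_less_cf N r \<longleftrightarrow>
     (\<forall>A. A \<subseteq> {x. N x = 1} \<longrightarrow> card_less_cf A r \<longrightarrow>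
        (\<exists>y. N y = 1 \<and> (\<forall>x\<in>A. N (x + y) \<le> 1 \<and> N (x - y) \<le> 1)))"

end

theory Submission
  imports Defs "HOL-Library.Countable_Set_Type"
begin

text \<open>Let \<open>T\<close> embed \<open>c\<^sub>0(\<kappa>)\<close> into \<open>X\<close>, with unit vectors \<open>e\<^sub>a = T \<delta>\<^sub>a\<close> and hyperplanes
  \<open>Y\<^sub>a = T {f. f a = 0}\<close>, and enumerate a dense set as \<open>g\<^sub>\<beta>\<close>, \<open>\<beta> < \<kappa>\<close>, so that each initial segment
  \<open>G\<^sub>\<gamma> = {g\<^sub>\<beta>. \<beta> < \<gamma>}\<close> has fewer than \<open>\<kappa>\<close> elements. A counting argument with rational linear
  combinations shows that for every \<open>\<gamma>\<close> some \<open>e\<^sub>a\<close> stays far from \<open>span (G\<^sub>\<gamma> \<union> Y\<^sub>a)\<close>. Collecting, for each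
  \<open>a\<close>, all such segments into a subspace \<open>W\<^sub>a\<close> far from \<open>e\<^sub>a\<close>, the norm
  \<open>max (d(x, T c\<^sub>0)) (sup\<^sub>a d(x, W\<^sub>a) / d(e\<^sub>a, W\<^sub>a))\<close> is equivalent to the original one.
  By uncountable cofinality every point lies in the closure of some \<open>G\<^sub>\<gamma>\<close>, so any fewer than
  \<open>cf \<kappa>\<close> points lie in the closure of a single segment, hence in the closure of \<open>W\<^sub>a\<close> for a suitable
  \<open>a\<close>; then \<open>e\<^sub>a\<close> is the required \<open>y\<close>, because the \<open>a\<close>-th term of the supremum vanishes there.\<close>

unbundle cardinal_syntax

lemma c0_add:
  assumes f: "f \<in> c0" and g: "g \<in> c0"
  shows "(\<lambda>k. f k + g k) \<in> c0"
  unfolding c0_def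
proof (intro CollectI allI impI)
  fix e :: real
  assume e: "e > 0"
  have "{k. e \<le> \<bar>f k + g k\<bar>} \<subseteq> {k. e/2 \<le> \<bar>f k\<bar>} \<union> {k. e/2 \<le> \<bar>g k\<bar>}" by auto
  moreover have "finite {k. e/2 \<le> \<bar>f k\<bar>}" "finite {k. e/2 \<le> \<bar>g k\<bar>}"
    using f g e half_gt_zero unfolding c0_def mem_Collect_eq by blast+
  ultimately show "finite {k. e \<le> \<bar>f k + g k\<bar>}" by (meson finite_Un finite_subset)
qed

lemma c0_scale:
  assumes f: "f \<in> c0"
  shows "(\<lambda>k. a * f k) \<in> c0"
  unfolding c0_def
proof (intro CollectI allI impI)
  fix e :: real
  assume e: "e > 0"
  show "finite {k. e \<le> \<bar>a * f k\<bar>}"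
  proof (cases "a = 0")
    case True
    then show ?thesis using e by simp
  next
    case False
    have "{k. e \<le> \<bar>a * f k\<bar>} \<subseteq> {k. e/\<bar>a\<bar> \<le> \<bar>f k\<bar>}"
      using False by (auto simp: abs_mult pos_divide_le_eq mult.commute)
    moreover have "finite {k. e/\<bar>a\<bar> \<le> \<bar>f k\<bar>}" using f e False unfolding c0_def by auto
    ultimately show ?thesis by (rule finite_subset)
  qed
qed

lemma c0_diff: "f \<in> c0 \<Longrightarrow> g \<in> c0 \<Longrightarrow> (\<lambda>k. f k - g k) \<in> c0"
  using c0_add[of f "\<lambda>k. (-1) * g k"] c0_scale[of g "-1"] by simp

lemma c0_zero: "(\<lambda>k. 0) \<in> c0"
  unfolding c0_def by simp

definition delta :: "'k \<Rightarrow> 'k \<Rightarrow> real" where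
  "delta a k = (if k = a then 1 else 0)"

lemma c0_delta: "delta a \<in> c0"
  unfolding c0_def delta_def
proof (intro CollectI allI impI)
  fix e :: real
  assume "e > 0"
  then have "{k. e \<le> \<bar>(if k = a then 1 else 0)::real\<bar>} \<subseteq> {a}" by auto
  then show "finite {k. e \<le> \<bar>(if k = a then 1 else 0)::real\<bar>}" by (rule finite_subset) simp
qed

lemma c0_bdd_above: assumes "f \<in> c0" shows "bdd_above (range (\<lambda>k. \<bar>f k\<bar>))"
proof -
  let ?F = "{k. 1 \<le> \<bar>f k\<bar>}"
  have "finite ?F" using assms unfolding c0_def by auto
  have "\<bar>f k\<bar> \<le> max 1 (\<Sum>j\<in>?F. \<bar>f j\<bar>)" for k
  proof (cases "k \<in> ?F")
    case True
    then have "\<bar>f k\<bar> \<le> (\<Sum>j\<in>?F. \<bar>f j\<bar>)" using \<open>finite ?F\<close> by (intro member_le_sum) auto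
    then show ?thesis by (simp add: le_max_iff_disj)
  qed (simp add: le_max_iff_disj)
  then show ?thesis by (intro bdd_aboveI2)
qed

lemma abs_le_supnorm: "f \<in> c0 \<Longrightarrow> \<bar>f k\<bar> \<le> supnorm f"
  unfolding supnorm_def using c0_bdd_above by (intro cSUP_upper) auto

lemma supnorm_least: "(\<And>k. \<bar>f k\<bar> \<le> B) \<Longrightarrow> supnorm f \<le> B"
  unfolding supnorm_def by (intro cSUP_least) auto

lemma supnorm_delta: "supnorm (delta a) = 1"
  using abs_le_supnorm[OF c0_delta, of a a] supnorm_least[of "delta a" 1]
  by (simp add: delta_def)

lemma abs_homogeneous_if_le:
  fixes p :: "'a::real_vector \<Rightarrow> real"
  assumes le: "\<And>c x. p (c *\<^sub>R x) \<le> \<bar>c\<bar> * p x"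
  shows "p (c *\<^sub>R x) = \<bar>c\<bar> * p x"
proof (cases "c = 0")
  case True
  have "p 0 \<le> 0" using le[of 0 x] by simp
  moreover have "p 0 \<le> 2 * p 0" using le[of 2 0] by simp
  ultimately show ?thesis using True by simp
next
  case False
  have "p x = p (inverse c *\<^sub>R (c *\<^sub>R x))" using False by simp
  also have "\<dots> \<le> \<bar>inverse c\<bar> * p (c *\<^sub>R x)" by (rule le)
  finally have "\<bar>c\<bar> * p x \<le> p (c *\<^sub>R x)"
    using False by (simp add: field_simps abs_inverse divide_le_eq)
  with le[of c x] show ?thesis by simp
qed

lemma infdist_greatest: "A \<noteq> {} \<Longrightarrow> (\<And>a. a \<in> A \<Longrightarrow> e \<le> dist x a) \<Longrightarrow> e \<le> infdist x A"
  by (simp add: infdist_notempty cINF_greatest)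

lemma infdist_less_iff: "A \<noteq> {} \<Longrightarrow> infdist x A < e \<longleftrightarrow> (\<exists>a\<in>A. dist x a < e)"
  by (simp add: infdist_notempty cINF_less_iff)

context
  fixes S :: "'a::real_normed_vector set"
  assumes S: "subspace S"
begin

lemma subspace_nonempty: "S \<noteq> {}"
  using S subspace_0 by blast

lemma infdist_subspace_add_le: "infdist (x + y) S \<le> infdist x S + infdist y S"
proof -
  have "infdist (x + y) S - dist x a \<le> infdist y S" if a: "a \<in> S" for a
  proof (rule infdist_greatest[OF subspace_nonempty])
    fix b assume "b \<in> S"
    with a S have "infdist (x + y) S \<le> dist (x + y) (a + b)" by (simp add: infdist_le subspace_add)
    also have "\<dots> \<le> dist x a + dist y b"
      by (simp add: dist_norm) (metis add_diff_add norm_triangle_ineq)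
    finally show "infdist (x + y) S - dist x a \<le> dist y b" by simp
  qed
  then have "infdist (x + y) S - infdist y S \<le> infdist x S"
    by (intro infdist_greatest[OF subspace_nonempty]) (simp add: algebra_simps)
  then show ?thesis by simp
qed

lemma infdist_subspace_scaleR: "infdist (c *\<^sub>R x) S = \<bar>c\<bar> * infdist x S"
proof (rule abs_homogeneous_if_le)
  fix c x
  show "infdist (c *\<^sub>R x) S \<le> \<bar>c\<bar> * infdist x S"
  proof (cases "c = 0")
    case True
    then show ?thesis using subspace_0[OF S] by simp
  next
    case False
    have "infdist (c *\<^sub>R x) S / \<bar>c\<bar> \<le> infdist x S"
    proof (rule infdist_greatest[OF subspace_nonempty])
      fix a assume "a \<in> S"
      with S have "infdist (c *\<^sub>R x) S \<le> dist (c *\<^sub>R x) (c *\<^sub>R a)" by (simp add: infdist_le subspace_scale)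
      also have "\<dots> = \<bar>c\<bar> * dist x a" by (simp add: dist_norm flip: scaleR_diff_right)
      finally show "infdist (c *\<^sub>R x) S / \<bar>c\<bar> \<le> dist x a"
        using False by (simp add: divide_le_eq mult.commute)
    qed
    then show ?thesis using False by (simp add: divide_le_eq mult.commute)
  qed
qed

lemma infdist_subspace_add_mem: "w \<in> S \<Longrightarrow> infdist (x + w) S = infdist x S"
  using infdist_subspace_add_le[of x w] infdist_subspace_add_le[of "x + w" "-w"] S
  by (simp add: subspace_neg)

lemma infdist_subspace_le_norm: "infdist x S \<le> norm x"
  using infdist_le[OF subspace_0[OF S], of x] by simp

end

fun rat_combinations :: "'a::real_normed_vector set \<Rightarrow> nat \<Rightarrow> 'a set" where
  "rat_combinations S 0 = {0}"
| "rat_combinations S (Suc n) =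
     (\<lambda>(q, v, d). of_rat q *\<^sub>R v + d) ` (UNIV \<times> S \<times> rat_combinations S n)"

definition rat_span :: "'a::real_normed_vector set \<Rightarrow> 'a set" where
  "rat_span S = (\<Union>n. rat_combinations S n)"

lemma countable_card_le_infinite: "countable A \<Longrightarrow> infinite C \<Longrightarrow> |A| \<le>o |C|"
  using countable_card_of_nat infinite_iff_card_of_nat ordLeq_transitive by blast

lemma card_rat_span_le:
  assumes C: "infinite C" and S: "|S| \<le>o |C|"
  shows "|rat_span S| \<le>o |C|"
proof -
  have "|rat_combinations S n| \<le>o |C|" for n
  proof (induction n)
    case 0
    show ?case by (simp add: C countable_card_le_infinite)
  next
    case (Suc n)
    have "|UNIV :: rat set| \<le>o |C|" using countable_card_le_infinite[OF countableI_type C] .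
    moreover have "|S \<times> rat_combinations S n| \<le>o |C|"
      using card_of_Sigma_ordLeq_infinite[OF C S, of "\<lambda>_. rat_combinations S n"] Suc.IH by simp
    ultimately have "|(UNIV :: rat set) \<times> S \<times> rat_combinations S n| \<le>o |C|"
      using card_of_Sigma_ordLeq_infinite[OF C, of "UNIV :: rat set" "\<lambda>_. S \<times> rat_combinations S n"] by simp
    then show ?case using card_of_image ordLeq_transitive by (simp only: rat_combinations.simps) blast
  qed
  then show ?thesis unfolding rat_span_def
    by (intro card_of_UNION_ordLeq_infinite[OF C]) (auto intro: countable_card_le_infinite[OF _ C])
qed

lemma sum_in_closure_rat_span:
  assumes "finite t" "t \<subseteq> S"
  shows "(\<Sum>v\<in>t. c v *\<^sub>R v) \<in> closure (rat_span S)"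
  using assms
proof (induction t rule: finite_induct)
  case empty
  have "0 \<in> rat_span S" unfolding rat_span_def using rat_combinations.simps(1) by blast
  then show ?case by (simp add: closure_def)
next
  case (insert v t)
  show ?case unfolding closure_approachable
  proof (intro allI impI)
    fix \<epsilon> :: real
    assume "\<epsilon> > 0"
    then obtain d where d: "d \<in> rat_span S" "dist d (\<Sum>v\<in>t. c v *\<^sub>R v) < \<epsilon>/2"
      using insert unfolding closure_approachable by (meson half_gt_zero insert_subset)
    obtain n where n: "d \<in> rat_combinations S n" using d(1) unfolding rat_span_def by blast
    define \<eta> where "\<eta> = \<epsilon> / (2 * (norm v + 1))"
    have "\<eta> > 0" unfolding \<eta>_def using \<open>\<epsilon> > 0\<close> by (simp add: add_nonneg_pos)
    then obtain x where x: "x \<in> \<rat>" "\<bar>c v - x\<bar> < \<eta>"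
      using Rats_dense_in_real[of "c v - \<eta>" "c v + \<eta>"] by (auto simp: abs_less_iff)
    then obtain q where q: "\<bar>c v - of_rat q\<bar> < \<eta>" by (auto elim: Rats_cases)
    have "of_rat q *\<^sub>R v + d \<in> rat_combinations S (Suc n)"
      using n insert(4) by (auto intro!: image_eqI[of _ _ "(q, v, d)"])
    then have "of_rat q *\<^sub>R v + d \<in> rat_span S" unfolding rat_span_def by blast
    moreover have "dist (of_rat q *\<^sub>R v + d) (\<Sum>v\<in>insert v t. c v *\<^sub>R v) < \<epsilon>"
    proof -
      have "(\<Sum>v\<in>insert v t. c v *\<^sub>R v) - (of_rat q *\<^sub>R v + d)
          = (c v - of_rat q) *\<^sub>R v + ((\<Sum>v\<in>t. c v *\<^sub>R v) - d)"
        using insert(1,2) by (simp add: algebra_simps)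
      then have "dist (of_rat q *\<^sub>R v + d) (\<Sum>v\<in>insert v t. c v *\<^sub>R v)
          \<le> norm ((c v - of_rat q) *\<^sub>R v) + norm ((\<Sum>v\<in>t. c v *\<^sub>R v) - d)"
        by (metis dist_commute dist_norm norm_triangle_ineq)
      moreover have "norm ((c v - of_rat q) *\<^sub>R v) \<le> \<eta> * (norm v + 1)"
        using q by (simp add: mult_mono)
      moreover have "\<eta> * (norm v + 1) = \<epsilon>/2"
      proof -
        have "norm v + 1 \<noteq> 0" using norm_ge_zero[of v] by linarith
        then show ?thesis unfolding \<eta>_def by (simp add: field_simps)
      qed
      moreover have "norm ((\<Sum>v\<in>t. c v *\<^sub>R v) - d) < \<epsilon>/2"
        using d(2) by (simp add: dist_norm norm_minus_commute)
      ultimately show ?thesis by linarith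
    qed
    ultimately show "\<exists>y\<in>rat_span S. dist y (\<Sum>v\<in>insert v t. c v *\<^sub>R v) < \<epsilon>" by blast
  qed
qed

lemma span_subset_closure_rat_span: "span S \<subseteq> closure (rat_span S)"
  unfolding span_explicit using sum_in_closure_rat_span by blast

lemma card_le_if_finite_fibres:
  assumes C: "infinite C" and "f ` A \<subseteq> B" "|B| \<le>o |C|" and fib: "\<And>b. finite {a\<in>A. f a = b}"
  shows "|A| \<le>o |C|"
proof -
  have "|f ` A| \<le>o |C|" using card_of_mono1[OF assms(2)] assms(3) by (rule ordLeq_transitive)
  then have "|\<Union>b\<in>f ` A. {a\<in>A. f a = b}| \<le>o |C|"
    using countable_card_le_infinite[OF countable_finite[OF fib] C]
    by (intro card_of_UNION_ordLeq_infinite[OF C]) auto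
  moreover have "(\<Union>b\<in>f ` A. {a\<in>A. f a = b}) = A" by auto
  ultimately show ?thesis by simp
qed

lemma card_Plus_nat_less:
  assumes "uncountable (UNIV :: 'k set)" and S: "|S| <o |UNIV :: 'k set|"
  shows "|S <+> (UNIV :: nat set)| <o |UNIV :: 'k set|"
proof -
  have "\<not> |UNIV :: 'k set| \<le>o |UNIV :: nat set|" using assms(1) countable_card_of_nat by blast
  then have "|UNIV :: nat set| <o |UNIV :: 'k set|"
    by (simp add: not_ordLeq_iff_ordLess card_of_Well_order)
  moreover have "infinite (UNIV :: 'k set)" using assms(1) countable_finite by blast
  ultimately show ?thesis by (intro card_of_Plus_ordLess_infinite S)
qed

lemma
  assumes "card_order r"
  shows card_order_refl: "(x, x) \<in> r"
    and card_order_total: "(x, y) \<in> r \<or> (y, x) \<in> r"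
    and card_order_underS_mono: "(x, y) \<in> r \<Longrightarrow> underS r x \<subseteq> underS r y"
proof -
  have "Well_order r" "Field r = UNIV"
    using well_order_on_Well_order card_order_on_well_order_on[OF assms] by blast+
  then have wo: "wo_rel r" by (simp add: wo_rel_def)
  show "(x, x) \<in> r" using wo_rel.REFL[OF wo] \<open>Field r = UNIV\<close> by (simp add: refl_on_def)
  show "(x, y) \<in> r \<or> (y, x) \<in> r" using wo_rel.TOTALS[OF wo] \<open>Field r = UNIV\<close> by blast
  show "(x, y) \<in> r \<Longrightarrow> underS r x \<subseteq> underS r y"
    by (rule underS_incr[OF wo_rel.TRANS[OF wo] wo_rel.ANTISYM[OF wo]])
qed

lemma uncountable_cf_uncountable:
  fixes r :: "'k rel"
  assumes "card_order r" "uncountable_cf r"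
  shows "uncountable (UNIV :: 'k set)"
proof -
  have "cofinal_in r UNIV" using card_order_refl[OF assms(1)] by (auto simp: cofinal_in_def)
  then show ?thesis using assms(2) unfolding uncountable_cf_def by blast
qed

lemma card_underS_less:
  fixes r :: "'k rel"
  assumes r: "card_order r"
  shows "|underS r x| <o |UNIV :: 'k set|"
proof -
  have "Card_order r" "Field r = UNIV" using card_order_on_Card_order[OF r] by auto
  then have "|underS r x| <o r" using card_of_underS[of r x] by simp
  then show ?thesis using card_of_unique[OF r] by (rule ordLess_ordIso_trans)
qed

lemma bounded_if_not_cofinal:
  assumes "card_order r" "\<not> cofinal_in r B"
  obtains \<gamma> where "B \<subseteq> underS r \<gamma>"
proof -
  obtain \<gamma> where \<gamma>: "\<forall>b\<in>B. (\<gamma>, b) \<notin> r" using assms(2) unfolding cofinal_in_def by blast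
  have "B \<subseteq> underS r \<gamma>"
  proof
    fix b assume "b \<in> B"
    then have "(\<gamma>, b) \<notin> r" using \<gamma> by blast
    then show "b \<in> underS r \<gamma>"
      using card_order_total[OF assms(1), of \<gamma> b] card_order_refl[OF assms(1), of b]
      unfolding underS_def by auto
  qed
  then show thesis by (rule that)
qed

lemma closure_range_initial_segment:
  fixes g :: "'k \<Rightarrow> 'a::first_countable_topology" and r :: "'k rel"
  assumes r: "card_order r" "uncountable_cf r" and x: "x \<in> closure (range g)"
  obtains \<gamma> where "x \<in> closure (g ` underS r \<gamma>)"
proof -
  obtain s where s: "\<And>n. s n \<in> range g" "s \<longlonglongrightarrow> x"
    using x unfolding closure_sequential by blast
  have "\<forall>n. \<exists>b. s n = g b" using s(1) by blast
  then obtain \<beta> where \<beta>: "\<And>n. s n = g (\<beta> n)" by metis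
  have "\<not> cofinal_in r (range \<beta>)" using r(2) unfolding uncountable_cf_def by blast
  then obtain \<gamma> where "range \<beta> \<subseteq> underS r \<gamma>" using bounded_if_not_cofinal r(1) by blast
  then have "\<And>n. s n \<in> g ` underS r \<gamma>" using \<beta> by blast
  then have "x \<in> closure (g ` underS r \<gamma>)" using s(2) unfolding closure_sequential by blast
  then show thesis by (rule that)
qed

lemma card_less_cf_bounded:
  assumes "card_order r" "card_less_cf A r"
  obtains \<gamma> where "\<forall>x\<in>A. (f x, \<gamma>) \<in> r"
proof -
  have "\<not> cofinal_in r (f ` A)"
  proof
    assume "cofinal_in r (f ` A)"
    then have "|A| <o |f ` A|" using assms(2) unfolding card_less_cf_def by blast
    then show False using card_of_image[of f A] not_ordLess_ordLeq by blast
  qed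
  then obtain \<gamma> where "f ` A \<subseteq> underS r \<gamma>" using bounded_if_not_cofinal assms(1) by blast
  then show thesis by (intro that) (auto simp: underS_def)
qed

locale c0_embedding =
  fixes T :: "('k \<Rightarrow> real) \<Rightarrow> 'a::real_normed_vector" and m M :: real
  assumes m_pos: "0 < m"
    and T_add: "\<forall>f\<in>c0. \<forall>g\<in>c0. T (\<lambda>k. f k + g k) = T f + T g"
    and T_scale: "\<forall>f\<in>c0. \<forall>a. T (\<lambda>k. a * f k) = a *\<^sub>R T f"
    and T_bounds: "\<forall>f\<in>c0. m * supnorm f \<le> norm (T f) \<and> norm (T f) \<le> M * supnorm f"
begin

definition basis :: "'k \<Rightarrow> 'a" where
  "basis a = T (delta a)"

definition Y :: "'a set" where
  "Y = T ` c0"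

definition Y_ker :: "'k \<Rightarrow> 'a set" where
  "Y_ker a = T ` {f\<in>c0. f a = 0}"

lemma T_zero: "T (\<lambda>k. 0) = 0"
  using T_scale[rule_format, OF c0_zero, of 0] by simp

lemma T_diff:
  assumes f: "f \<in> c0" and g: "g \<in> c0"
  shows "T (\<lambda>k. f k - g k) = T f - T g"
proof -
  have "T (\<lambda>k. f k + (-1) * g k) = T f + T (\<lambda>k. (-1) * g k)"
    by (rule T_add[rule_format, OF f c0_scale[OF g]])
  also have "T (\<lambda>k. (-1) * g k) = (-1) *\<^sub>R T g" by (rule T_scale[rule_format, OF g])
  finally show ?thesis by simp
qed

lemma abs_le_norm_T:
  assumes "f \<in> c0"
  shows "m * \<bar>f k\<bar> \<le> norm (T f)"
proof -
  have "m * \<bar>f k\<bar> \<le> m * supnorm f" using abs_le_supnorm[OF assms] m_pos by simp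
  also have "\<dots> \<le> norm (T f)" using T_bounds assms by blast
  finally show ?thesis .
qed

lemma norm_T_le: "f \<in> c0 \<Longrightarrow> norm (T f) \<le> M * supnorm f"
  using T_bounds by blast

lemma M_pos: "0 < M"
proof -
  have "m \<le> norm (T (delta a))" "norm (T (delta a)) \<le> M" for a
    using abs_le_norm_T[OF c0_delta[of a], of a] norm_T_le[OF c0_delta[of a]]
    by (simp_all add: delta_def supnorm_delta)
  from this[of undefined] show ?thesis using m_pos by linarith
qed

lemma subspace_image_T:
  assumes "V \<subseteq> c0" "(\<lambda>k. 0) \<in> V"
    and "\<And>f g. f \<in> V \<Longrightarrow> g \<in> V \<Longrightarrow> (\<lambda>k. f k + g k) \<in> V"
    and "\<And>f a. f \<in> V \<Longrightarrow> (\<lambda>k. a * f k) \<in> V"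
  shows "subspace (T ` V)"
  unfolding subspace_def
proof (intro conjI ballI allI)
  show "0 \<in> T ` V" using assms(2) T_zero by force
next
  fix x y assume "x \<in> T ` V" "y \<in> T ` V"
  then obtain f g where "f \<in> V" "g \<in> V" "x = T f" "y = T g" by auto
  moreover have "T (\<lambda>k. f k + g k) = T f + T g" using T_add \<open>f \<in> V\<close> \<open>g \<in> V\<close> assms(1) by blast
  ultimately show "x + y \<in> T ` V" using assms(3) by (metis image_eqI)
next
  fix c :: real and x assume "x \<in> T ` V"
  then obtain f where "f \<in> V" "x = T f" by auto
  moreover have "T (\<lambda>k. c * f k) = c *\<^sub>R T f" using T_scale \<open>f \<in> V\<close> assms(1) by blast
  ultimately show "c *\<^sub>R x \<in> T ` V" using assms(4) by (metis image_eqI)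
qed

lemma subspace_Y: "subspace Y"
  unfolding Y_def by (intro subspace_image_T) (auto simp: c0_add c0_scale c0_zero)

lemma subspace_Y_ker: "subspace (Y_ker a)"
  unfolding Y_ker_def by (intro subspace_image_T) (auto simp: c0_add c0_scale c0_zero)

lemma basis_in_Y: "basis a \<in> Y"
  unfolding basis_def Y_def by (rule imageI[OF c0_delta])

lemma basis_in_Y_ker:
  assumes "a \<noteq> b"
  shows "basis a \<in> Y_ker b"
proof -
  have "delta a b = 0" using assms by (simp add: delta_def)
  then show ?thesis unfolding basis_def Y_ker_def by (intro imageI) (simp add: c0_delta)
qed

lemma Y_ker_subset_Y: "Y_ker a \<subseteq> Y"
  unfolding Y_ker_def Y_def by auto

lemma abs_le_dist_Y_ker:
  assumes f: "f \<in> c0" and w: "w \<in> Y_ker a"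
  shows "m * \<bar>f a\<bar> \<le> dist (T f) w"
proof -
  obtain h where h: "h \<in> c0" "h a = 0" "w = T h" using w unfolding Y_ker_def by auto
  show ?thesis
    using abs_le_norm_T[OF c0_diff[OF f h(1)], of a] T_diff[OF f h(1)] h by (simp add: dist_norm)
qed

lemma T_eq_basis_plus_Y_ker:
  assumes f: "f \<in> c0"
  obtains w where "w \<in> Y_ker a" "T f = f a *\<^sub>R basis a + w"
proof -
  let ?h = "\<lambda>k. f a * delta a k"
  have h: "?h \<in> c0" using c0_scale[OF c0_delta] .
  have g: "(\<lambda>k. f k - ?h k) \<in> c0" by (rule c0_diff[OF f h])
  have "T (\<lambda>k. f k - ?h k) \<in> Y_ker a"
    unfolding Y_ker_def by (intro imageI CollectI conjI g) (simp add: delta_def)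
  moreover have "T ?h = f a *\<^sub>R basis a" unfolding basis_def by (rule T_scale[rule_format, OF c0_delta])
  moreover have "T f = T ?h + T (\<lambda>k. f k - ?h k)" using T_diff[OF f h] by simp
  ultimately show thesis using that by simp
qed

lemma finite_near_translates_of_Y_ker:
  assumes "y \<in> Y"
  shows "finite {b. \<exists>w\<in>Y_ker b. dist y (basis b + w) < m/2}"
proof -
  obtain f where f: "f \<in> c0" "y = T f" using assms unfolding Y_def by auto
  have "{b. \<exists>w\<in>Y_ker b. dist y (basis b + w) < m/2} \<subseteq> {k. 1/2 \<le> \<bar>f k\<bar>}"
  proof safe
    fix b w assume w: "w \<in> Y_ker b" and near: "dist y (basis b + w) < m/2"
    have "dist y (basis b + w) = dist (T (\<lambda>k. f k - delta b k)) w"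
      using T_diff[OF f(1) c0_delta[of b]] f(2) unfolding basis_def by (simp add: dist_norm diff_diff_eq)
    then have "m * \<bar>f b - 1\<bar> < m * (1/2)"
      using abs_le_dist_Y_ker[OF c0_diff[OF f(1) c0_delta[of b]] w] near by (simp add: delta_def)
    then show "1/2 \<le> \<bar>f b\<bar>" using m_pos by (simp only: mult_less_cancel_left_pos)
  qed
  moreover have "\<forall>e>0. finite {k. e \<le> \<bar>f k\<bar>}" using f(1) unfolding c0_def by simp
  then have "finite {k. 1/2 \<le> \<bar>f k\<bar>}" by (rule allE[of _ "1/2"]) simp
  ultimately show ?thesis by (rule finite_subset)
qed

lemma finite_fibres_near_basis:
  assumes z: "\<And>a. z a \<in> Y_ker a" and near: "\<And>a. dist (basis a) (\<phi> a + z a) < m/4"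
  shows "finite {a \<in> A. \<phi> a = d}"
proof (cases "\<exists>a0. \<phi> a0 = d")
  case True
  then obtain a0 where a0: "\<phi> a0 = d" by blast
  let ?y = "basis a0 - z a0"
  have "?y \<in> Y" using subspace_diff[OF subspace_Y basis_in_Y subsetD[OF Y_ker_subset_Y z]] .
  have "{a \<in> A. \<phi> a = d} \<subseteq> {b. \<exists>w\<in>Y_ker b. dist ?y (basis b + w) < m/2}"
  proof (intro subsetI CollectI)
    fix b assume "b \<in> {a \<in> A. \<phi> a = d}"
    then have b: "\<phi> b = d" by simp
    have "?y - (basis b + - z b) = (basis a0 - (d + z a0)) - (basis b - (d + z b))"
      by (simp add: algebra_simps)
    then have "dist ?y (basis b + - z b)
        = norm ((basis a0 - (d + z a0)) - (basis b - (d + z b)))" by (simp only: dist_norm)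
    also have "\<dots> \<le> dist (basis a0) (d + z a0) + dist (basis b) (d + z b)"
      unfolding dist_norm by (rule norm_triangle_ineq4)
    also have "\<dots> < m/2" using near[of a0] near[of b] a0 b by simp
    finally show "\<exists>w\<in>Y_ker b. dist ?y (basis b + w) < m/2"
      by (intro bexI[of _ "- z b"] subspace_neg[OF subspace_Y_ker z])
  qed
  then show ?thesis by (rule finite_subset[OF _ finite_near_translates_of_Y_ker[OF \<open>?y \<in> Y\<close>]])
qed simp

end

locale c0_renorming = c0_embedding T m M for T :: "('k \<Rightarrow> real) \<Rightarrow> 'a::real_normed_vector" and m M +
  fixes W :: "'k \<Rightarrow> 'a set" and \<delta> :: real
  assumes subspace_W: "subspace (W a)" and Y_ker_subset_W: "Y_ker a \<subseteq> W a"
    and \<delta>_pos: "0 < \<delta>" and \<delta>_le_infdist: "\<delta> \<le> infdist (basis a) (W a)"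
begin

text \<open>Since \<open>coord a (T f) = \<bar>f a\<bar>\<close>, the norm \<open>N\<close> restricts to the sup-norm of \<open>c\<^sub>0\<close> on \<open>Y\<close>;
  the distance term makes it dominate the original norm off \<open>Y\<close>.\<close>

definition coord :: "'k \<Rightarrow> 'a \<Rightarrow> real" where
  "coord a x = infdist x (W a) / infdist (basis a) (W a)"

definition coord_sup :: "'a \<Rightarrow> real" where
  "coord_sup x = (SUP a. coord a x)"

definition N :: "'a \<Rightarrow> real" where
  "N x = max (infdist x Y) (coord_sup x)"

lemma infdist_basis_pos: "0 < infdist (basis a) (W a)"
  using \<delta>_le_infdist[of a] \<delta>_pos by linarith

lemma coord_nonneg: "0 \<le> coord a x"
  unfolding coord_def using infdist_basis_pos by (simp add: infdist_nonneg)

lemma coord_le_norm: "coord a x \<le> norm x / \<delta>"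
proof -
  have "coord a x \<le> norm x / infdist (basis a) (W a)"
    unfolding coord_def using infdist_subspace_le_norm[OF subspace_W] infdist_basis_pos[of a]
    by (simp add: divide_right_mono)
  also have "\<dots> \<le> norm x / \<delta>" using \<delta>_le_infdist \<delta>_pos by (simp add: frac_le)
  finally show ?thesis .
qed

lemma coord_add_le: "coord a (x + y) \<le> coord a x + coord a y"
  unfolding coord_def add_divide_distrib[symmetric]
  using infdist_subspace_add_le[OF subspace_W[of a], of x y] infdist_basis_pos[of a]
  by (simp add: divide_right_mono)

lemma coord_scaleR: "coord a (c *\<^sub>R x) = \<bar>c\<bar> * coord a x"
  unfolding coord_def by (simp add: infdist_subspace_scaleR[OF subspace_W])

lemma coord_basis: "coord b (basis a) = (if a = b then 1 else 0)"
proof (cases "a = b")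
  case True
  then show ?thesis unfolding coord_def using infdist_basis_pos[of a] by simp
next
  case False
  then have "basis a \<in> W b" using basis_in_Y_ker Y_ker_subset_W by blast
  then show ?thesis using False unfolding coord_def by simp
qed

lemma coord_T:
  assumes "f \<in> c0"
  shows "coord a (T f) = \<bar>f a\<bar>"
proof -
  obtain w where w: "w \<in> Y_ker a" "T f = f a *\<^sub>R basis a + w"
    using T_eq_basis_plus_Y_ker[OF assms] by blast
  moreover have "w \<in> W a" using w(1) Y_ker_subset_W by blast
  ultimately have "coord a (T f) = coord a (f a *\<^sub>R basis a)"
    unfolding coord_def by (simp add: infdist_subspace_add_mem[OF subspace_W])
  then show ?thesis by (simp add: coord_scaleR coord_basis)
qed

lemma coord_closure_W: "x \<in> closure (W a) \<Longrightarrow> coord a x = 0"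
  unfolding coord_def using in_closure_iff_infdist_zero[of "W a" x] subspace_0[OF subspace_W] by auto

lemma coord_le_coord_sup: "coord a x \<le> coord_sup x"
  unfolding coord_sup_def using coord_le_norm by (intro cSUP_upper bdd_aboveI2) auto

lemma coord_sup_least: "(\<And>a. coord a x \<le> B) \<Longrightarrow> coord_sup x \<le> B"
  unfolding coord_sup_def by (intro cSUP_least) auto

lemma coord_sup_nonneg: "0 \<le> coord_sup x"
  using coord_le_coord_sup coord_nonneg order_trans by blast

lemma coord_sup_add_le: "coord_sup (x + y) \<le> coord_sup x + coord_sup y"
  by (rule coord_sup_least) (meson coord_le_coord_sup add_mono order_trans coord_add_le)

lemma coord_sup_scaleR: "coord_sup (c *\<^sub>R x) = \<bar>c\<bar> * coord_sup x"
  by (rule abs_homogeneous_if_le, rule coord_sup_least)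
     (simp add: coord_scaleR coord_le_coord_sup mult_left_mono)

lemma N_add_le: "N (x + y) \<le> N x + N y"
  unfolding N_def using infdist_subspace_add_le[OF subspace_Y, of x y] coord_sup_add_le[of x y]
  by (simp add: max_def)

lemma N_scaleR: "N (c *\<^sub>R x) = \<bar>c\<bar> * N x"
  unfolding N_def by (simp add: infdist_subspace_scaleR[OF subspace_Y] coord_sup_scaleR max_mult_distrib_left)

lemma N_le_norm: "N x \<le> (1 + 1/\<delta>) * norm x"
proof -
  have "0 \<le> norm x / \<delta>" using \<delta>_pos by simp
  then have "infdist x Y \<le> norm x + norm x / \<delta>" "coord_sup x \<le> norm x + norm x / \<delta>"
    using infdist_subspace_le_norm[OF subspace_Y, of x] coord_sup_least[OF coord_le_norm, of x]
      norm_ge_zero[of x] by linarith+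
  then show ?thesis unfolding N_def by (simp add: algebra_simps)
qed

lemma norm_le_N: "norm x \<le> (1 + M + M/\<delta>) * N x"
proof -
  have K: "0 < 1 + M/\<delta>" using M_pos \<delta>_pos by (simp add: add_pos_nonneg)
  have bound: "norm x - M * coord_sup x \<le> (1 + M/\<delta>) * dist x u" if "u \<in> Y" for u
  proof -
    obtain f where f: "f \<in> c0" "u = T f" using \<open>u \<in> Y\<close> unfolding Y_def by auto
    have "supnorm f \<le> coord_sup x + dist x u / \<delta>"
    proof (rule supnorm_least)
      fix a
      have "\<bar>f a\<bar> = coord a (x + (u - x))" using coord_T[OF f(1)] f(2) by simp
      also have "\<dots> \<le> coord a x + coord a (u - x)" by (rule coord_add_le)
      also have "\<dots> \<le> coord_sup x + dist x u / \<delta>"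
        using coord_le_coord_sup[of a x] coord_le_norm[of a "u - x"]
        by (simp add: dist_norm norm_minus_commute)
      finally show "\<bar>f a\<bar> \<le> coord_sup x + dist x u / \<delta>" .
    qed
    have "norm x \<le> dist x u + norm u" using norm_triangle_sub[of x u] by (simp add: dist_norm)
    also have "\<dots> \<le> dist x u + M * (coord_sup x + dist x u / \<delta>)"
      using norm_T_le[OF f(1)] mult_left_mono[OF \<open>supnorm f \<le> _\<close> less_imp_le[OF M_pos]] f(2)
      by simp
    finally show ?thesis by (simp add: algebra_simps)
  qed
  have "(norm x - M * coord_sup x) / (1 + M/\<delta>) \<le> infdist x Y"
    using bound K by (intro infdist_greatest[OF subspace_nonempty[OF subspace_Y]])
      (simp add: pos_divide_le_eq mult.commute)
  then have "norm x \<le> (1 + M/\<delta>) * infdist x Y + M * coord_sup x"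
    using K by (simp add: divide_le_eq mult.commute)
  also have "\<dots> \<le> (1 + M/\<delta>) * N x + M * N x"
    unfolding N_def using K M_pos by (intro add_mono mult_left_mono) auto
  finally show ?thesis by (simp add: algebra_simps)
qed

lemma equiv_norm_N: "equiv_norm N"
  unfolding equiv_norm_def
proof (intro conjI allI)
  have K: "0 < 1 + M + M/\<delta>" using M_pos \<delta>_pos by (simp add: add_pos_pos)
  fix x y :: 'a and c :: real
  show "0 \<le> N x" unfolding N_def using coord_sup_nonneg[of x] by simp
  show "N x = 0 \<longleftrightarrow> x = 0" using norm_le_N[of x] N_scaleR[of 0 0] K by auto
  show "N (x + y) \<le> N x + N y" by (rule N_add_le)
  show "N (c *\<^sub>R x) = \<bar>c\<bar> * N x" by (rule N_scaleR)
  show "\<exists>m M. 0 < m \<and> (\<forall>x. m * norm x \<le> N x \<and> N x \<le> M * norm x)"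
  proof (rule exI, rule exI)
    show "0 < 1 / (1 + M + M/\<delta>) \<and>
        (\<forall>x. 1 / (1 + M + M/\<delta>) * norm x \<le> N x \<and> N x \<le> (1 + 1/\<delta>) * norm x)"
      using norm_le_N N_le_norm K by (simp add: field_simps)
  qed
qed

lemma N_basis: "N (basis a) = 1"
proof -
  have "coord_sup (basis a) = 1"
    using coord_le_coord_sup[of a "basis a"] coord_sup_least[of "basis a" 1] by (simp add: coord_basis)
  then show ?thesis unfolding N_def using basis_in_Y by simp
qed

lemma N_add_basis_le:
  assumes x: "x \<in> closure (W a)" "N x \<le> 1" and c: "\<bar>c\<bar> \<le> 1"
  shows "N (x + c *\<^sub>R basis a) \<le> 1"
proof -
  have "infdist (x + c *\<^sub>R basis a) Y \<le> 1"
    using infdist_subspace_add_mem[OF subspace_Y] subspace_scale[OF subspace_Y basis_in_Y] x(2)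
    unfolding N_def by simp
  moreover have "coord_sup (x + c *\<^sub>R basis a) \<le> 1"
  proof (rule coord_sup_least)
    fix b
    have "coord b (x + c *\<^sub>R basis a) \<le> coord b x + \<bar>c\<bar> * coord b (basis a)"
      using coord_add_le coord_scaleR by metis
    also have "\<dots> \<le> 1"
      using coord_closure_W[OF x(1)] coord_le_coord_sup[of b x] x(2) c unfolding N_def
      by (auto simp: coord_basis)
    finally show "coord b (x + c *\<^sub>R basis a) \<le> 1" .
  qed
  ultimately show ?thesis unfolding N_def by simp
qed

end

locale c0_dense_enumeration = c0_embedding T m M for T :: "('k \<Rightarrow> real) \<Rightarrow> 'a::real_normed_vector" and m M +
  fixes r :: "'k rel" and g :: "'k \<Rightarrow> 'a"
  assumes card_order: "card_order r" and uncountable_cf: "uncountable_cf r"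
begin

definition G :: "'k \<Rightarrow> 'a set" where
  "G \<gamma> = g ` underS r \<gamma>"

definition good :: "'k \<Rightarrow> 'k \<Rightarrow> bool" where
  "good a \<gamma> \<longleftrightarrow> m/8 \<le> infdist (basis a) (span (G \<gamma> \<union> Y_ker a))"

definition W :: "'k \<Rightarrow> 'a set" where
  "W a = span (\<Union> (G ` {\<gamma>. good a \<gamma>}) \<union> Y_ker a)"

lemma G_mono: "(\<gamma>, \<gamma>') \<in> r \<Longrightarrow> G \<gamma> \<subseteq> G \<gamma>'"
  unfolding G_def by (intro image_mono card_order_underS_mono[OF card_order])

lemma card_G_less: "|G \<gamma>| <o |UNIV :: 'k set|"
  unfolding G_def using card_of_image card_underS_less[OF card_order] by (rule ordLeq_ordLess_trans)

lemma finite_subset_good_segment: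
  assumes "finite t" "t \<subseteq> \<Union> (G ` {\<gamma>. good a \<gamma>})" "t \<noteq> {}"
  obtains \<gamma> where "good a \<gamma>" "t \<subseteq> G \<gamma>"
proof -
  have "G \<gamma> \<subseteq> G \<gamma>' \<or> G \<gamma>' \<subseteq> G \<gamma>" for \<gamma> \<gamma>'
    using G_mono card_order_total[OF card_order] by blast
  then have "subset.chain UNIV (G ` {\<gamma>. good a \<gamma>})" unfolding subset_chain_def by blast
  moreover have "G ` {\<gamma>. good a \<gamma>} \<noteq> {}" using assms(2,3) by auto
  ultimately obtain B where "B \<in> G ` {\<gamma>. good a \<gamma>}" "t \<subseteq> B"
    using finite_subset_Union_chain[OF assms(1,2)] by blast
  then show thesis using that by blast
qed

lemma infdist_basis_W: "m/8 \<le> infdist (basis a) (W a)"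
proof (rule infdist_greatest)
  show "W a \<noteq> {}" unfolding W_def using span_zero by blast
next
  fix w assume "w \<in> W a"
  then obtain y z where yz: "w = y + z" "y \<in> span (\<Union> (G ` {\<gamma>. good a \<gamma>}))" "z \<in> span (Y_ker a)"
    unfolding W_def span_Un by blast
  have z: "z \<in> Y_ker a" using yz(3) subspace_Y_ker span_eq_iff by blast
  obtain t c where t: "finite t" "t \<subseteq> \<Union> (G ` {\<gamma>. good a \<gamma>})" "y = (\<Sum>v\<in>t. c v *\<^sub>R v)"
    using yz(2) unfolding span_explicit by blast
  show "m/8 \<le> dist (basis a) w"
  proof (cases "t = {}")
    case True
    then have "m * \<bar>delta a a\<bar> \<le> dist (basis a) w"
      using abs_le_dist_Y_ker[OF c0_delta z] t(3) yz(1) unfolding basis_def by simp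
    then show ?thesis using m_pos by (simp add: delta_def)
  next
    case False
    then obtain \<gamma> where \<gamma>: "good a \<gamma>" "t \<subseteq> G \<gamma>" using finite_subset_good_segment t by blast
    have "y \<in> span (G \<gamma> \<union> Y_ker a)"
      unfolding t(3) using \<gamma>(2) by (intro span_sum span_scale span_base) auto
    moreover have "z \<in> span (G \<gamma> \<union> Y_ker a)" using z by (intro span_base) auto
    ultimately have "w \<in> span (G \<gamma> \<union> Y_ker a)" using yz(1) span_add by blast
    then have "infdist (basis a) (span (G \<gamma> \<union> Y_ker a)) \<le> dist (basis a) w" by (rule infdist_le)
    then show ?thesis using \<gamma>(1) unfolding good_def by simp
  qed
qed

sublocale c0_renorming T m M W "m/8"
proof
  show "subspace (W a)" for a unfolding W_def by (rule subspace_span)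
  show "Y_ker a \<subseteq> W a" for a unfolding W_def using span_superset by blast
  show "0 < m/8" using m_pos by simp
  show "m/8 \<le> infdist (basis a) (W a)" for a by (rule infdist_basis_W)
qed

lemma approx_if_not_good:
  assumes "\<not> good a \<gamma>"
  obtains d z where "d \<in> rat_span (G \<gamma>)" "z \<in> Y_ker a" "dist (basis a) (d + z) < m/4"
proof -
  let ?S = "span (G \<gamma> \<union> Y_ker a)"
  have "?S \<noteq> {}" using span_zero by blast
  moreover have "infdist (basis a) ?S < m/8" using assms unfolding good_def by simp
  ultimately obtain w where w: "w \<in> ?S" "dist (basis a) w < m/8"
    using infdist_less_iff by blast
  then obtain y z where yz: "w = y + z" "y \<in> span (G \<gamma>)" "z \<in> span (Y_ker a)"
    unfolding span_Un by blast
  have z: "z \<in> Y_ker a" using yz(3) subspace_Y_ker span_eq_iff by blast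
  have "y \<in> closure (rat_span (G \<gamma>))" using span_subset_closure_rat_span yz(2) by blast
  moreover have "m/8 > 0" using m_pos by simp
  ultimately obtain d where d: "d \<in> rat_span (G \<gamma>)" "dist d y < m/8"
    unfolding closure_approachable by blast
  have "basis a - (d + z) = (basis a - w) + (y - d)" using yz(1) by (simp add: algebra_simps)
  then have "dist (basis a) (d + z) = norm ((basis a - w) + (y - d))" by (simp only: dist_norm)
  also have "\<dots> \<le> norm (basis a - w) + norm (y - d)" by (rule norm_triangle_ineq)
  also have "\<dots> < m/4" using w(2) d(2) by (simp add: dist_norm norm_minus_commute)
  finally show thesis by (rule that[OF d(1) z])
qed

lemma exists_good: "\<exists>a. good a \<gamma>"
proof (rule ccontr)
  assume none: "\<nexists>a. good a \<gamma>"
  have "\<exists>p. fst p \<in> rat_span (G \<gamma>) \<and> snd p \<in> Y_ker a \<and> dist (basis a) (fst p + snd p) < m/4" for a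
  proof -
    obtain d z where "d \<in> rat_span (G \<gamma>)" "z \<in> Y_ker a" "dist (basis a) (d + z) < m/4"
      using approx_if_not_good none by blast
    then show ?thesis by (intro exI[of _ "(d, z)"]) simp
  qed
  then obtain P where P: "\<forall>a. fst (P a) \<in> rat_span (G \<gamma>) \<and> snd (P a) \<in> Y_ker a \<and>
      dist (basis a) (fst (P a) + snd (P a)) < m/4"
    using choice[of "\<lambda>a p. fst p \<in> rat_span (G \<gamma>) \<and> snd p \<in> Y_ker a \<and>
      dist (basis a) (fst p + snd p) < m/4"] by blast
  define \<phi> where "\<phi> a = fst (P a)" for a
  define z where "z a = snd (P a)" for a
  have \<phi>: "\<phi> ` UNIV \<subseteq> rat_span (G \<gamma>)" and z: "\<And>a. z a \<in> Y_ker a"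
    and near: "\<And>a. dist (basis a) (\<phi> a + z a) < m/4"
    using P unfolding \<phi>_def z_def by auto
  define C where "C = G \<gamma> <+> (UNIV :: nat set)"
  have C: "infinite C" unfolding C_def by simp
  have "|rat_span (G \<gamma>)| \<le>o |C|"
    unfolding C_def by (rule card_rat_span_le[OF C[unfolded C_def] card_of_Plus1])
  then have "|UNIV :: 'k set| \<le>o |C|"
    by (rule card_le_if_finite_fibres[OF C \<phi> _ finite_fibres_near_basis[OF z near]])
  moreover have "|C| <o |UNIV :: 'k set|"
    unfolding C_def
    by (rule card_Plus_nat_less[OF uncountable_cf_uncountable[OF card_order uncountable_cf] card_G_less])
  ultimately show False using not_ordLess_ordLeq by blast
qed

lemma closure_G_subset_closure_W:
  assumes "(\<gamma>, \<gamma>') \<in> r" "good a \<gamma>'"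
  shows "closure (G \<gamma>) \<subseteq> closure (W a)"
proof (rule closure_mono)
  have "G \<gamma> \<subseteq> \<Union> (G ` {\<gamma>. good a \<gamma>})" using G_mono[OF assms(1)] assms(2) by blast
  then show "G \<gamma> \<subseteq> W a" unfolding W_def using span_superset by blast
qed

lemma SQ_less_cf_N:
  assumes dense: "closure (range g) = UNIV"
  shows "SQ_less_cf N r"
  unfolding SQ_less_cf_def
proof (intro allI impI)
  fix A assume A: "A \<subseteq> {x. N x = 1}" and "card_less_cf A r"
  have "\<exists>\<gamma>. x \<in> closure (G \<gamma>)" for x
    using closure_range_initial_segment[OF card_order uncountable_cf, of x g] dense
    unfolding G_def by blast
  then obtain \<gamma>x where \<gamma>x: "\<And>x. x \<in> closure (G (\<gamma>x x))" by metis
  obtain \<gamma> where \<gamma>: "\<forall>x\<in>A. (\<gamma>x x, \<gamma>) \<in> r"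
    using card_less_cf_bounded[OF card_order \<open>card_less_cf A r\<close>] by blast
  obtain a where a: "good a \<gamma>" using exists_good by blast
  have x: "x \<in> closure (W a)" "N x \<le> 1" if "x \<in> A" for x
    using closure_G_subset_closure_W[OF \<gamma>[rule_format, OF that] a] \<gamma>x[of x] A that by auto
  show "\<exists>y. N y = 1 \<and> (\<forall>x\<in>A. N (x + y) \<le> 1 \<and> N (x - y) \<le> 1)"
    using N_basis N_add_basis_le[OF x, of _ 1] N_add_basis_le[OF x, of _ "-1"] by auto
qed

end

theorem theorem3p7:
  fixes r :: "'k rel"
  assumes "card_order r"
    and "infinite (UNIV :: 'k set)"
    and "uncountable_cf r"
    and "density_char_eq TYPE('a::banach) (UNIV :: 'k set)"
    and "contains_c0 TYPE('a) (UNIV :: 'k set)"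
  shows "\<exists>N :: 'a \<Rightarrow> real. equiv_norm N \<and> SQ_less_cf N r"
proof -
  obtain T :: "('k \<Rightarrow> real) \<Rightarrow> 'a" and m M where T: "c0_embedding T m M"
    using assms(5) unfolding contains_c0_def c0_embedding_def by blast
  obtain D :: "'a set" where D: "closure D = UNIV" "|D| =o |UNIV :: 'k set|"
    using assms(4) unfolding density_char_eq_def by blast
  then obtain g :: "'k \<Rightarrow> 'a" where "bij_betw g UNIV D"
    using card_of_ordIso ordIso_symmetric by blast
  then have "closure (range g) = UNIV" using D(1) by (simp add: bij_betw_def)
  interpret c0_dense_enumeration T m M r g
    using T assms(1,3) by (simp add: c0_dense_enumeration_def c0_dense_enumeration_axioms_def)
  show ?thesis using equiv_norm_N SQ_less_cf_N[OF \<open>closure (range g) = UNIV\<close>] by blast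
qed

end
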